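(* Let $\beta\in(0,1)$, $x^1\ge0$, and let $C:\mathbb{R}_+\to\mathbb{R}_+$ be increasing, strictly convex and continuously differentiable with $c=C'$, $\lim_{x\to\infty}c(x)=\infty$, and $c^{-1}$ the inverse of $c$ on its range. Let $\mathbb{P}$ be a probability distribution with nonnegative support, finite mean, and no atoms, and let $\boldsymbol{p},\boldsymbol{p}^1,\boldsymbol{p}^2,\ldots$ be i.i.d. with law $\mathbb{P}$. Fix price samples $p_1,\ldots,p_N$, let $\mu_N=\frac1N\sum_{i=1}^Np_i$, and define the SDP and MPC policies $$y_{\mathrm{S}}(x,p)=c^{-1}\Bigl(\bigl(\beta\tfrac1N\textstyle\sum_{i=1}^N(p_i-p)_+-(1-\beta)p\bigr)_{[c(0),c(x)]}\Bigr),\qquad y_{\mathrm{M}}(x,p)=c^{-1}\Bigl(\bigl(\beta(\mu_N-p)_+-(1-\beta)p\bigr)_{[c(0),c(x)]}\Bigr).$$ If $$c(x)\ge\beta\,\mathbb{E}_{\mathbb{P}}\bigl[\boldsymbol{p}\,\mathbb{1}\{\boldsymbol{p}>p^\star_{\mathrm{S}}(x)\}\bigr]\quad\forall x\in[0,x^1],$$ then $\bar V_{\mathrm{M}}(x)\ge\bar V_{\mathrm{S}}(x)$ for each $x\in[0,x^1]$.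
   Context: $(z)_{[a,b]}$ is the projection of $z$ onto $[a,b]$, $(z)_+=\max\{z,0\}$, $\mathbb{1}$ is the event indicator. For a policy $y\in\{y_{\mathrm{S}},y_{\mathrm{M}}\}$, $y(\infty,p)=\lim_{x\to\infty}y(x,p)$ is its target inventory level, and the minimum acceptable price $p^\star(x)$ is the highest price $p$ solving $y(\infty,p)=x$; $p^\star_{\mathrm{S}}$ denotes this for $y_{\mathrm{S}}$. The out-of-sample value of a policy $y$ from initial inventory $x$ is $\bar V_y(x)=\mathbb{E}_{\mathbb{P}^\infty}[\sum_{t=1}^\infty\beta^{t-1}(\boldsymbol{p}^t(x^t-x^{t+1})-C(x^{t+1}))]$ with $x^1=x$ and $x^{t+1}=y(x^t,\boldsymbol{p}^t)$; $\bar V_{\mathrm{S}}=\bar V_{y_{\mathrm{S}}}$ and $\bar V_{\mathrm{M}}=\bar V_{y_{\mathrm{M}}}$. *)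

theory Defs
  imports "HOL-Probability.Probability"
begin

definition strict_convex_on :: "real set \<Rightarrow> (real \<Rightarrow> real) \<Rightarrow> bool" where
  "strict_convex_on S f \<longleftrightarrow>
     (\<forall>x\<in>S. \<forall>y\<in>S. x \<noteq> y \<longrightarrow> (\<forall>u::real. 0 < u \<longrightarrow> u < 1 \<longrightarrow>
        f ((1 - u) * x + u * y) < (1 - u) * f x + u * f y))"

definition proj :: "real \<Rightarrow> real \<Rightarrow> real \<Rightarrow> real" where
  "proj a b z = max a (min b z)"

definition pos :: "real \<Rightarrow> real" where
  "pos z = max z 0"

definition cinv :: "(real \<Rightarrow> real) \<Rightarrow> real \<Rightarrow> real" where
  "cinv c = inv_into {0..} c"

definition y_S :: "(real \<Rightarrow> real) \<Rightarrow> real \<Rightarrow> nat \<Rightarrow> (nat \<Rightarrow> real) \<Rightarrow> real \<Rightarrow> real \<Rightarrow> real" where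
  "y_S c \<beta> N ps x p =
     cinv c (proj (c 0) (c x)
       (\<beta> * ((\<Sum>i<N. pos (ps i - p)) / real N) - (1 - \<beta>) * p))"

definition mu :: "nat \<Rightarrow> (nat \<Rightarrow> real) \<Rightarrow> real" where
  "mu N ps = (\<Sum>i<N. ps i) / real N"

definition y_M :: "(real \<Rightarrow> real) \<Rightarrow> real \<Rightarrow> nat \<Rightarrow> (nat \<Rightarrow> real) \<Rightarrow> real \<Rightarrow> real \<Rightarrow> real" where
  "y_M c \<beta> N ps x p =
     cinv c (proj (c 0) (c x) (\<beta> * pos (mu N ps - p) - (1 - \<beta>) * p))"

text \<open>Target inventory level y(\<infinity>,p) = lim_{x\<rightarrow>\<infinity>} y(x,p).\<close>
definition target :: "(real \<Rightarrow> real \<Rightarrow> real) \<Rightarrow> real \<Rightarrow> real" where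
  "target y p = Lim at_top (\<lambda>x. y x p)"

text \<open>Minimum acceptable price: the highest p with y(\<infinity>,p) = x, taken as a supremum
  in the extended reals (it is +\<infinity> when the solution set is unbounded above, e.g. x = 0).\<close>
definition pstar :: "(real \<Rightarrow> real \<Rightarrow> real) \<Rightarrow> real \<Rightarrow> ereal" where
  "pstar y x = Sup {ereal p | p. target y p = x}"

text \<open>Inventory path: inv_path y x \<omega> 0 = x^1 = x, inv_path y x \<omega> (t+1) = y(x^t, p^t),
  where the price of period t+1 is \<omega> t.\<close>
primrec inv_path :: "(real \<Rightarrow> real \<Rightarrow> real) \<Rightarrow> real \<Rightarrow> (nat \<Rightarrow> real) \<Rightarrow> nat \<Rightarrow> real" where
  "inv_path y x \<omega> 0 = x"
| "inv_path y x \<omega> (Suc t) = y (inv_path y x \<omega> t) (\<omega> t)"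

definition Vbar :: "real measure \<Rightarrow> real \<Rightarrow> (real \<Rightarrow> real) \<Rightarrow> (real \<Rightarrow> real \<Rightarrow> real) \<Rightarrow> real \<Rightarrow> real" where
  "Vbar P \<beta> C y x =
     integral\<^sup>L (PiM UNIV (\<lambda>_::nat. P))
       (\<lambda>\<omega>. \<Sum>t. \<beta> ^ t * (\<omega> t * (inv_path y x \<omega> t - inv_path y x \<omega> (Suc t))
                           - C (inv_path y x \<omega> (Suc t))))"

end

theory Submission
  imports Defs
begin

text \<open>Both policies sell down to a price-dependent target, \<open>y(x, p) = min x (T p)\<close> with
  \<open>T p = c\<^sup>-\<^sup>1 (max (c 0) (z p))\<close> for a strictly decreasing score \<open>z\<close>, and Jensen's inequality
  for the positive part puts the MPC score, hence the MPC target \<open>T\<^sub>M\<close>, below the SDP one.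

  The hypothesis on \<open>c\<close>, together with the fact that the SDP policy only sells at prices above
  \<open>p\<^sup>\<star>\<^sub>S\<close>, bounds the slope of the SDP value function: \<open>\<beta> (V\<^sub>S b - V\<^sub>S a) \<le> C b - C a\<close> on
  \<open>[0, x\<^sup>1]\<close>. This goes by induction over finite horizons: given the bound for \<open>n\<close> periods,
  the increment of the \<open>(n + 1)\<close>-period value over \<open>[a, b]\<close> is at most
  \<open>(b - a) E[p 1{T\<^sub>S p < b}] \<le> (b - a) c b / \<beta>\<close>, and such local bounds add up to \<open>C b - C a\<close> by
  the tangent inequality of the convex cost.

  Given the slope bound, selling down to \<open>T\<^sub>M\<close> for one period and following the SDP policy
  afterwards does at least as well as the SDP policy. By the Bellman equation of the MPC policy,
  \<open>D = V\<^sub>M - V\<^sub>S\<close> then satisfies \<open>\<beta> E[D (y\<^sub>M (x, p))] \<le> D x\<close>; since \<open>D\<close> is bounded on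
  \<open>[0, x\<^sup>1]\<close>, its infimum \<open>m\<close> satisfies \<open>\<beta> m \<le> m\<close>, so \<open>m \<ge> 0\<close>.\<close>

context sequence_space
begin

lemma
  fixes h :: "(nat \<Rightarrow> 'a) \<Rightarrow> real"
  assumes "integrable S h"
  shows integral_case_nat: "(\<integral>\<omega>. h \<omega> \<partial>S) = (\<integral>p. (\<integral>\<omega>. h (case_nat p \<omega>) \<partial>S) \<partial>M)"
    and integrable_integral_case_nat: "integrable M (\<lambda>p. \<integral>\<omega>. h (case_nat p \<omega>) \<partial>S)"
proof -
  interpret pair_sigma_finite M S
    by (intro pair_sigma_finite.intro prob_space_imp_sigma_finite M.prob_space_axioms prob_space_PiM)
  define F where "F = (\<lambda>(p, \<omega>). case_nat p \<omega> :: nat \<Rightarrow> 'a)"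
  have [measurable]: "F \<in> measurable (M \<Otimes>\<^sub>M S) S" "h \<in> borel_measurable S"
    using assms unfolding F_def by measurable
  have distr: "distr (M \<Otimes>\<^sub>M S) S F = S"
    unfolding F_def by (rule PiM_iter)
  then have integrable: "integrable (M \<Otimes>\<^sub>M S) (\<lambda>x. h (F x))"
    using assms integrable_distr_eq[of F "M \<Otimes>\<^sub>M S" S h] by simp
  have "(\<integral>\<omega>. h \<omega> \<partial>S) = (\<integral>x. h (F x) \<partial>(M \<Otimes>\<^sub>M S))"
    by (subst distr[symmetric]) (rule integral_distr; measurable)
  also have "\<dots> = (\<integral>p. (\<integral>\<omega>. h (F (p, \<omega>)) \<partial>S) \<partial>M)"
    by (rule integral_fst'[OF integrable, symmetric])
  finally show "(\<integral>\<omega>. h \<omega> \<partial>S) = (\<integral>p. (\<integral>\<omega>. h (case_nat p \<omega>) \<partial>S) \<partial>M)"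
    by (simp add: F_def)
  show "integrable M (\<lambda>p. \<integral>\<omega>. h (case_nat p \<omega>) \<partial>S)"
    using integrable_fst'[OF integrable] by (simp add: F_def)
qed

end

lemma AE_summable_norm_if_summable_integral_norm:
  fixes f :: "nat \<Rightarrow> 'a \<Rightarrow> real"
  assumes [measurable]: "\<And>i. integrable M (f i)"
    and summable: "summable (\<lambda>i. \<integral>x. norm (f i x) \<partial>M)"
  shows "AE x in M. summable (\<lambda>i. norm (f i x))"
proof -
  have "(\<integral>\<^sup>+x. (\<Sum>i. ennreal (norm (f i x))) \<partial>M) = (\<Sum>i. \<integral>\<^sup>+x. norm (f i x) \<partial>M)"
    by (rule nn_integral_suminf) measurable
  also have "\<dots> = (\<Sum>i. ennreal (\<integral>x. norm (f i x) \<partial>M))"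
    using assms(1) by (intro suminf_cong nn_integral_eq_integral) auto
  also have "\<dots> = ennreal (\<Sum>i. \<integral>x. norm (f i x) \<partial>M)"
    using summable by (intro suminf_ennreal2) auto
  finally have "AE x in M. (\<Sum>i. ennreal (norm (f i x))) \<noteq> \<infinity>"
    by (intro nn_integral_PInf_AE) auto
  then show ?thesis
    by eventually_elim (auto intro: summable_suminf_not_top)
qed

lemma increment_le_of_small_increments_le:
  fixes G :: "real \<Rightarrow> real"
  assumes "0 < \<delta>" "a \<le> b"
    and small: "\<And>u v. a \<le> u \<Longrightarrow> u \<le> v \<Longrightarrow> v \<le> b \<Longrightarrow> v - u < \<delta> \<Longrightarrow> G v - G u \<le> \<epsilon> * (v - u)"
  shows "G b - G a \<le> \<epsilon> * (b - a)"
proof -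
  obtain n :: nat where n: "(b - a) / \<delta> < real n"
    using reals_Archimedean2 by blast
  then have "0 < n"
    using assms(1,2) by (metis divide_nonneg_pos diff_ge_0_iff_ge of_nat_0_less_iff le_less_trans)
  define h where "h = (b - a) / real n"
  define u where "u k = a + real k * h" for k
  have "0 \<le> h" "h < \<delta>" "real n * h = b - a"
    using assms(1,2) \<open>0 < n\<close> n by (auto simp: h_def field_simps)
  have "G (u k) - G a \<le> \<epsilon> * (u k - a)" if "k \<le> n" for k
    using that
  proof (induction k)
    case (Suc k)
    have "real (Suc k) * h \<le> real n * h"
      using Suc.prems \<open>0 \<le> h\<close> by (intro mult_right_mono) auto
    then have "a \<le> u k" "u k \<le> u (Suc k)" "u (Suc k) \<le> b" "u (Suc k) - u k < \<delta>"
      using \<open>0 \<le> h\<close> \<open>h < \<delta>\<close> \<open>real n * h = b - a\<close> by (auto simp: u_def distrib_right)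
    then have "G (u (Suc k)) - G (u k) \<le> \<epsilon> * (u (Suc k) - u k)"
      by (intro small)
    with Suc show ?case
      by (simp add: algebra_simps)
  qed (simp add: u_def)
  from this[of n] show ?thesis
    using \<open>real n * h = b - a\<close> by (simp add: u_def)
qed

lemma le_of_increments_le_oscillation:
  fixes G w :: "real \<Rightarrow> real"
  assumes cont: "continuous_on {a..b} w" and "a \<le> b"
    and incr: "\<And>u v. a \<le> u \<Longrightarrow> u \<le> v \<Longrightarrow> v \<le> b \<Longrightarrow> G v - G u \<le> (w v - w u) * (v - u)"
  shows "G b \<le> G a"
proof (rule field_le_epsilon)
  fix d :: real assume "0 < d"
  define \<epsilon> where "\<epsilon> = d / (b - a + 1)"
  have "0 < \<epsilon>"
    using \<open>0 < d\<close> \<open>a \<le> b\<close> by (simp add: \<epsilon>_def)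
  then obtain \<delta> where "0 < \<delta>"
    and \<delta>: "\<And>u v. u \<in> {a..b} \<Longrightarrow> v \<in> {a..b} \<Longrightarrow> dist v u < \<delta> \<Longrightarrow> dist (w v) (w u) < \<epsilon>"
    using compact_uniformly_continuous[OF cont compact_Icc]
    unfolding uniformly_continuous_on_def by metis
  have "G v - G u \<le> \<epsilon> * (v - u)" if "a \<le> u" "u \<le> v" "v \<le> b" "v - u < \<delta>" for u v
  proof -
    have "w v - w u \<le> \<epsilon>"
      using \<delta>[of u v] that by (simp add: dist_real_def)
    then have "(w v - w u) * (v - u) \<le> \<epsilon> * (v - u)"
      using \<open>u \<le> v\<close> by (intro mult_right_mono) auto
    with incr[OF that(1-3)] show ?thesis
      by linarith
  qed
  then have "G b - G a \<le> \<epsilon> * (b - a)"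
    by (rule increment_le_of_small_increments_le[OF \<open>0 < \<delta>\<close> \<open>a \<le> b\<close>])
  also have "\<dots> \<le> d"
    using \<open>0 < d\<close> \<open>a \<le> b\<close> by (simp add: \<epsilon>_def field_simps)
  finally show "G b \<le> G a + d"
    by simp
qed

text \<open>Applied to the infimum \<open>m\<close> of \<open>D\<close>, the bound gives \<open>\<beta> m \<le> m\<close>.\<close>
lemma nonneg_if_discounted_infimum_bound:
  fixes D :: "'a \<Rightarrow> real"
  assumes "\<beta> < 1" and "S \<noteq> {}" and bdd: "bdd_below (D ` S)"
    and bound: "\<And>x m. x \<in> S \<Longrightarrow> (\<And>y. y \<in> S \<Longrightarrow> m \<le> D y) \<Longrightarrow> \<beta> * m \<le> D x"
    and "x \<in> S"
  shows "0 \<le> D x"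
proof -
  define m where "m = (INF y\<in>S. D y)"
  have m_le: "m \<le> D y" if "y \<in> S" for y
    unfolding m_def by (rule cINF_lower[OF bdd that])
  have "\<beta> * m \<le> (INF y\<in>S. D y)"
    by (rule cINF_greatest[OF \<open>S \<noteq> {}\<close>]) (rule bound[OF _ m_le])
  then have "(1 - \<beta>) * m \<ge> 0"
    by (simp add: m_def[symmetric] algebra_simps)
  then have "0 \<le> m"
    using \<open>\<beta> < 1\<close> by (simp add: zero_le_mult_iff)
  with m_le[OF \<open>x \<in> S\<close>] show ?thesis by simp
qed

lemma integral_mult_indicator_mono:
  fixes f :: "'a \<Rightarrow> real"
  assumes "integrable M f" and "AE x in M. 0 \<le> f x"
    and "A \<in> sets M" "B \<in> sets M" "A \<subseteq> B"
  shows "(\<integral>x. f x * indicator A x \<partial>M) \<le> (\<integral>x. f x * indicator B x \<partial>M)"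
proof (rule integral_mono_AE)
  show "AE x in M. f x * indicator A x \<le> f x * indicator B x"
    using assms(2) by eventually_elim (use \<open>A \<subseteq> B\<close> in \<open>auto simp: indicator_def\<close>)
qed (intro integrable_real_mult_indicator assms(1,3,4))+

section \<open>Convex cost and marginal cost\<close>

lemma convex_on_if_strict_convex_on:
  assumes "strict_convex_on S f" and "convex S"
  shows "convex_on S f"
proof
  fix t x y :: real assume "0 < t" "t < 1" "x \<in> S" "y \<in> S"
  with assms(1) have "x \<noteq> y \<Longrightarrow> f ((1 - t) * x + t * y) < (1 - t) * f x + t * f y"
    unfolding strict_convex_on_def by blast
  then show "f ((1 - t) *\<^sub>R x + t *\<^sub>R y) \<le> (1 - t) * f x + t * f y"
    by (cases "x = y") (auto simp: algebra_simps)
qed (fact \<open>convex S\<close>)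

lemma above_tangent_nonneg:
  fixes C c :: "real \<Rightarrow> real"
  assumes convex: "convex_on {0..} C"
    and deriv: "\<And>x. 0 \<le> x \<Longrightarrow> (C has_real_derivative c x) (at x within {0..})"
    and cont: "continuous_on {0..} c"
    and "0 \<le> a" "0 \<le> b"
  shows "c a * (b - a) \<le> C b - C a"
proof -
  have interior: "c e * (b - e) \<le> C b - C e" if "0 < e" for e
    using convex_on_imp_above_tangent[OF convex _ _ _ deriv, of e b] that \<open>0 \<le> b\<close>
    by (simp add: convex_connected)
  show ?thesis
  proof (cases "0 < a \<or> b = 0")
    case True
    with interior \<open>0 \<le> a\<close> show ?thesis
      by (cases "a = 0") auto
  next
    case False
    then have "a = 0" "0 < b" using \<open>0 \<le> a\<close> \<open>0 \<le> b\<close> by auto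
    have within: "at_right (0::real) \<le> at 0 within {0..}"
      by (rule at_le) auto
    have "continuous (at 0 within {0..}) c" "continuous (at 0 within {0..}) C"
      using cont deriv[of 0] by (auto simp: continuous_on_eq_continuous_within intro: DERIV_continuous)
    then have c0: "(c \<longlongrightarrow> c 0) (at_right 0)" and C0: "(C \<longlongrightarrow> C 0) (at_right 0)"
      using within by (auto simp: continuous_within intro: tendsto_mono)
    have "((\<lambda>e. c e * (b - e)) \<longlongrightarrow> c 0 * (b - 0)) (at_right 0)"
      by (rule tendsto_mult[OF c0 tendsto_diff[OF tendsto_const tendsto_ident_at]])
    moreover have "((\<lambda>e. C b - C e) \<longlongrightarrow> C b - C 0) (at_right 0)"
      by (rule tendsto_diff[OF tendsto_const C0])
    moreover have "eventually (\<lambda>e. c e * (b - e) \<le> C b - C e) (at_right 0)"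
      using eventually_at_right_real[OF \<open>0 < b\<close>] by eventually_elim (auto intro: interior)
    ultimately show ?thesis
      using \<open>a = 0\<close> by (intro tendsto_le[of "at_right 0"]) auto
  qed
qed

text \<open>Comparing both tangents at the endpoints with the chord through the midpoint.\<close>
lemma strict_mono_on_derivative_if_strict_convex:
  fixes C c :: "real \<Rightarrow> real"
  assumes sconv: "strict_convex_on {0..} C"
    and deriv: "\<And>x. 0 \<le> x \<Longrightarrow> (C has_real_derivative c x) (at x within {0..})"
    and cont: "continuous_on {0..} c"
  shows "strict_mono_on {0..} c"
proof (rule strict_mono_onI)
  fix a b :: real assume "a \<in> {0..}" "b \<in> {0..}" "a < b"
  define m where "m = (a + b) / 2"
  note tangent = above_tangent_nonneg[OF convex_on_if_strict_convex_on[OF sconv] deriv cont]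
  have "c a * (m - a) \<le> C m - C a" "c b * (m - b) \<le> C m - C b"
    by (rule tangent; use \<open>a \<in> {0..}\<close> \<open>a < b\<close> in \<open>simp add: m_def\<close>)+
  moreover have "C ((1 - 1/2) * a + 1/2 * b) < (1 - 1/2) * C a + 1/2 * C b"
    using sconv[unfolded strict_convex_on_def, rule_format, of a b "1/2"] \<open>a \<in> {0..}\<close> \<open>a < b\<close>
    by simp
  ultimately have "c a * (b - a) < c b * (b - a)"
    by (simp add: m_def field_simps)
  then show "c a < c b"
    using \<open>a < b\<close> by simp
qed

section \<open>Clipped target policies\<close>

definition clip_target :: "(real \<Rightarrow> real) \<Rightarrow> (real \<Rightarrow> real) \<Rightarrow> real \<Rightarrow> real" where
  "clip_target c z p = cinv c (max (c 0) (z p))"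

definition clip_policy :: "(real \<Rightarrow> real) \<Rightarrow> (real \<Rightarrow> real) \<Rightarrow> real \<Rightarrow> real \<Rightarrow> real" where
  "clip_policy c z x p = cinv c (proj (c 0) (c x) (z p))"

locale marginal_cost =
  fixes c :: "real \<Rightarrow> real"
  assumes strict_mono: "strict_mono_on {0..} c"
    and continuous: "continuous_on {0..} c"
    and unbounded: "filterlim c at_top at_top"
begin

lemma less_iff: "0 \<le> x \<Longrightarrow> 0 \<le> y \<Longrightarrow> c x < c y \<longleftrightarrow> x < y"
  by (simp add: strict_mono_on_less[OF strict_mono])

lemma le_iff: "0 \<le> x \<Longrightarrow> 0 \<le> y \<Longrightarrow> c x \<le> c y \<longleftrightarrow> x \<le> y"
  by (simp add: strict_mono_on_less_eq[OF strict_mono])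

lemma image_nonneg: "c 0 \<le> v \<Longrightarrow> v \<in> c ` {0..}"
proof -
  assume "c 0 \<le> v"
  obtain X where X: "\<And>x. X \<le> x \<Longrightarrow> v \<le> c x"
    using unbounded by (auto simp: filterlim_at_top eventually_at_top_linorder)
  have "continuous_on {0..max 0 X} c"
    using continuous by (rule continuous_on_subset) auto
  then obtain x where "0 \<le> x" "c x = v"
    using IVT'[of c 0 v "max 0 X"] \<open>c 0 \<le> v\<close> X[of "max 0 X"] by auto
  then show ?thesis by auto
qed

lemma cinv_nonneg: "c 0 \<le> v \<Longrightarrow> 0 \<le> cinv c v"
  unfolding cinv_def using inv_into_into[OF image_nonneg] by simp

lemma c_cinv: "c 0 \<le> v \<Longrightarrow> c (cinv c v) = v"
  unfolding cinv_def by (rule f_inv_into_f[OF image_nonneg])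

lemma cinv_c: "0 \<le> x \<Longrightarrow> cinv c (c x) = x"
  unfolding cinv_def using strict_mono_on_imp_inj_on[OF strict_mono] by (simp add: inv_into_f_f)

lemma cinv_mono:
  assumes "c 0 \<le> v" "v \<le> w"
  shows "cinv c v \<le> cinv c w"
proof -
  have "c 0 \<le> w"
    using assms by linarith
  then show ?thesis
    using le_iff[OF cinv_nonneg[OF assms(1)] cinv_nonneg[OF \<open>c 0 \<le> w\<close>]]
      c_cinv[OF assms(1)] c_cinv[OF \<open>c 0 \<le> w\<close>] assms(2) by simp
qed

lemma clip_target_nonneg: "0 \<le> clip_target c z p"
  unfolding clip_target_def by (simp add: cinv_nonneg)

lemma clip_target_mono: "z p \<le> z' p \<Longrightarrow> clip_target c z p \<le> clip_target c z' p"
  unfolding clip_target_def by (simp add: cinv_mono)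

lemma measurable_clip_target[measurable]:
  assumes [measurable]: "z \<in> borel_measurable borel"
  shows "clip_target c z \<in> borel_measurable borel"
proof -
  have "mono (\<lambda>v. cinv c (max (c 0) v))"
    by (intro monoI cinv_mono) auto
  then have [measurable]: "(\<lambda>v. cinv c (max (c 0) v)) \<in> borel_measurable borel"
    by (rule borel_measurable_mono)
  show ?thesis
    unfolding clip_target_def[abs_def] by measurable
qed

lemma clip_policy_eq_min:
  assumes "0 \<le> x"
  shows "clip_policy c z x p = min x (clip_target c z p)"
proof -
  let ?v = "max (c 0) (z p)"
  have "c 0 \<le> c x"
    using le_iff[of 0 x] assms by simp
  then have proj: "proj (c 0) (c x) (z p) = min (c x) ?v"
    unfolding proj_def by (simp add: max_def min_def)
  show ?thesis
  proof (cases "?v \<le> c x")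
    case True
    then have "cinv c ?v \<le> x"
      using cinv_mono[of ?v "c x"] cinv_c[OF assms] by simp
    with True show ?thesis
      unfolding clip_policy_def clip_target_def proj by simp
  next
    case False
    then have "x \<le> cinv c ?v"
      using cinv_mono[of "c x" ?v] cinv_c[OF assms] \<open>c 0 \<le> c x\<close> by simp
    moreover have "min (c x) ?v = c x"
      using False by linarith
    ultimately show ?thesis
      unfolding clip_policy_def clip_target_def proj by (simp add: cinv_c[OF assms])
  qed
qed

lemma target_clip_policy: "target (clip_policy c z) p = clip_target c z p"
proof -
  have "eventually (\<lambda>x. clip_policy c z x p = clip_target c z p) at_top"
    using eventually_ge_at_top[of "clip_target c z p"]
    by eventually_elim (metis clip_policy_eq_min clip_target_nonneg min.absorb2 order_trans)
  then have "((\<lambda>x. clip_policy c z x p) \<longlongrightarrow> clip_target c z p) at_top"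
    by (rule tendsto_eventually)
  then show ?thesis
    unfolding target_def by (intro tendsto_Lim) simp_all
qed

lemma c_clip_target: "c (clip_target c z p) = max (c 0) (z p)"
  unfolding clip_target_def by (simp add: c_cinv)

lemma clip_target_less_iff:
  assumes "0 < x"
  shows "clip_target c z p < x \<longleftrightarrow> z p < c x"
proof -
  have "clip_target c z p < x \<longleftrightarrow> max (c 0) (z p) < c x"
    using less_iff[OF clip_target_nonneg, of x] assms by (simp add: c_clip_target)
  also have "\<dots> \<longleftrightarrow> z p < c x"
    using less_iff[of 0 x] assms by auto
  finally show ?thesis .
qed

lemma clip_target_eq_iff:
  assumes "0 < x"
  shows "clip_target c z p = x \<longleftrightarrow> z p = c x"
proof -
  have "clip_target c z p = x \<longleftrightarrow> max (c 0) (z p) = c x"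
    using strict_mono_on_eq[OF strict_mono, of "clip_target c z p" x] clip_target_nonneg assms
    by (simp add: c_clip_target)
  also have "\<dots> \<longleftrightarrow> z p = c x"
    using less_iff[of 0 x] assms by (auto simp: max_def)
  finally show ?thesis .
qed

text \<open>For a strictly decreasing score the target level \<open>x > 0\<close> is attained at most once, at a
  price below every price whose target is below \<open>x\<close>.\<close>
lemma pstar_clip_policy_less:
  assumes antimono: "\<And>p q. p < q \<Longrightarrow> z q < z p"
    and "0 < x" and "clip_target c z q < x"
  shows "pstar (clip_policy c z) x < ereal q"
proof -
  define Z where "Z = {p. clip_target c z p = x}"
  have Z: "p \<in> Z \<longleftrightarrow> z p = c x" for p
    using clip_target_eq_iff[OF \<open>0 < x\<close>] by (simp add: Z_def)
  have "z q < c x"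
    using assms(3) clip_target_less_iff[OF \<open>0 < x\<close>] by simp
  then have below_q: "p < q" if "p \<in> Z" for p
    using that antimono[of q p] by (cases p q rule: linorder_cases) (auto simp: Z)
  have unique: "p' = p" if "p \<in> Z" "p' \<in> Z" for p p'
    using that antimono[of p p'] antimono[of p' p] by (cases p p' rule: linorder_cases) (auto simp: Z)
  have "Sup (ereal ` Z) < ereal q"
  proof (cases "Z = {}")
    case False
    then obtain p where "p \<in> Z" by blast
    with unique have "Z = {p}" by blast
    with below_q show ?thesis by simp
  qed (simp add: bot_ereal_def)
  moreover have "{ereal p | p. target (clip_policy c z) p = x} = ereal ` Z"
    by (auto simp: Z_def target_clip_policy)
  ultimately show ?thesis
    unfolding pstar_def by simp
qed

end

definition sdp_score :: "real \<Rightarrow> nat \<Rightarrow> (nat \<Rightarrow> real) \<Rightarrow> real \<Rightarrow> real" where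
  "sdp_score \<beta> N ps p = \<beta> * ((\<Sum>i<N. pos (ps i - p)) / real N) - (1 - \<beta>) * p"

definition mpc_score :: "real \<Rightarrow> nat \<Rightarrow> (nat \<Rightarrow> real) \<Rightarrow> real \<Rightarrow> real" where
  "mpc_score \<beta> N ps p = \<beta> * pos (mu N ps - p) - (1 - \<beta>) * p"

lemma y_S_eq_clip_policy: "y_S c \<beta> N ps = clip_policy c (sdp_score \<beta> N ps)"
  unfolding y_S_def clip_policy_def sdp_score_def by simp

lemma y_M_eq_clip_policy: "y_M c \<beta> N ps = clip_policy c (mpc_score \<beta> N ps)"
  unfolding y_M_def clip_policy_def mpc_score_def by simp

lemma measurable_sdp_score[measurable]: "sdp_score \<beta> N ps \<in> borel_measurable borel"
  unfolding sdp_score_def[abs_def] pos_def by measurable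

lemma measurable_mpc_score[measurable]: "mpc_score \<beta> N ps \<in> borel_measurable borel"
  unfolding mpc_score_def[abs_def] pos_def by measurable

lemma sdp_score_strict_antimono:
  assumes "0 \<le> \<beta>" "\<beta> < 1" "p < q"
  shows "sdp_score \<beta> N ps q < sdp_score \<beta> N ps p"
proof -
  have "(\<Sum>i<N. pos (ps i - q)) / real N \<le> (\<Sum>i<N. pos (ps i - p)) / real N"
    using assms by (intro divide_right_mono sum_mono) (auto simp: pos_def)
  then have "\<beta> * ((\<Sum>i<N. pos (ps i - q)) / real N) \<le> \<beta> * ((\<Sum>i<N. pos (ps i - p)) / real N)"
    using assms by (intro mult_left_mono)
  moreover have "(1 - \<beta>) * p < (1 - \<beta>) * q"
    using assms by simp
  ultimately show ?thesis
    unfolding sdp_score_def by linarith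
qed

text \<open>Jensen's inequality for the positive part.\<close>
lemma mpc_score_le_sdp_score:
  assumes "0 < N" "0 \<le> \<beta>"
  shows "mpc_score \<beta> N ps p \<le> sdp_score \<beta> N ps p"
proof -
  have "mu N ps - p = (\<Sum>i<N. ps i - p) / real N"
    using assms by (simp add: mu_def sum_subtractf field_simps)
  also have "\<dots> \<le> (\<Sum>i<N. pos (ps i - p)) / real N"
    by (intro divide_right_mono sum_mono) (auto simp: pos_def)
  finally have "mu N ps - p \<le> (\<Sum>i<N. pos (ps i - p)) / real N" .
  moreover have "0 \<le> (\<Sum>i<N. pos (ps i - p)) / real N"
    by (intro divide_nonneg_nonneg sum_nonneg) (auto simp: pos_def)
  ultimately have "pos (mu N ps - p) \<le> (\<Sum>i<N. pos (ps i - p)) / real N"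
    by (simp add: pos_def)
  then have "\<beta> * pos (mu N ps - p) \<le> \<beta> * ((\<Sum>i<N. pos (ps i - p)) / real N)"
    using assms(2) by (rule mult_left_mono)
  then show ?thesis
    unfolding mpc_score_def sdp_score_def by linarith
qed

section \<open>Value of a target policy\<close>

locale target_policy = prob_space P for P :: "real measure" +
  fixes \<beta> :: real and C T :: "real \<Rightarrow> real"
  assumes sets_P: "sets P = sets borel"
    and beta_pos: "0 < \<beta>" and beta_less_one: "\<beta> < 1"
    and C_nonneg: "\<And>x. 0 \<le> C x" and mono_C: "mono C"
    and integrable_price: "integrable P (\<lambda>p. p)"
    and T_measurable[measurable]: "T \<in> borel_measurable borel"
    and T_nonneg: "\<And>p. 0 \<le> T p"
begin

abbreviation Prices :: "(nat \<Rightarrow> real) measure" where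
  "Prices \<equiv> PiM UNIV (\<lambda>_. P)"

definition policy :: "real \<Rightarrow> real \<Rightarrow> real" where
  "policy x p = min x (T p)"

abbreviation stock :: "real \<Rightarrow> (nat \<Rightarrow> real) \<Rightarrow> nat \<Rightarrow> real" where
  "stock \<equiv> inv_path policy"

definition stage_reward :: "real \<Rightarrow> real \<Rightarrow> real" where
  "stage_reward x p = p * (x - policy x p) - C (policy x p)"

definition reward :: "nat \<Rightarrow> real \<Rightarrow> (nat \<Rightarrow> real) \<Rightarrow> real" where
  "reward t x \<omega> = \<beta> ^ t * stage_reward (stock x \<omega> t) (\<omega> t)"

definition expected_reward :: "nat \<Rightarrow> real \<Rightarrow> real" where
  "expected_reward t x = (\<integral>\<omega>. reward t x \<omega> \<partial>Prices)"

definition horizon_value :: "nat \<Rightarrow> real \<Rightarrow> real" where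
  "horizon_value n x = (\<Sum>t<n. expected_reward t x)"

definition policy_value :: "real \<Rightarrow> real" where
  "policy_value x = Vbar P \<beta> C policy x"

definition mean_abs_price :: real where
  "mean_abs_price = (\<integral>p. \<bar>p\<bar> \<partial>P)"

definition reward_bound :: "real \<Rightarrow> real" where
  "reward_bound x = mean_abs_price * x + C x"

lemma sequence_space_P: "sequence_space P"
  unfolding sequence_space_def product_prob_space_def product_prob_space_axioms_def
    product_sigma_finite_def
  by (simp add: prob_space_axioms prob_space_imp_sigma_finite)

lemma prob_space_Prices: "prob_space Prices"
  by (rule prob_space_PiM) (rule prob_space_axioms)

lemma borel_measurable_P: "borel_measurable P = borel_measurable borel"
  using sets_P by (rule measurable_cong_sets) simp

lemma C_measurable[measurable]: "C \<in> borel_measurable borel"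
  using mono_C by (rule borel_measurable_mono)

lemma measurable_price[measurable]: "(\<lambda>p. p) \<in> borel_measurable P"
  by (simp add: borel_measurable_P)

lemma measurable_coordinate[measurable]: "(\<lambda>\<omega>. \<omega> t) \<in> borel_measurable Prices"
  using measurable_component_singleton[of t UNIV "\<lambda>_. P"] measurable_cong_sets[OF refl sets_P]
  by simp

lemma measurable_policy[measurable (raw)]:
  assumes "f \<in> borel_measurable M" "g \<in> borel_measurable M"
  shows "(\<lambda>x. policy (f x) (g x)) \<in> borel_measurable M"
  unfolding policy_def
  using assms measurable_compose[OF assms(2) T_measurable] by (intro borel_measurable_min)

lemma measurable_stock[measurable (raw)]:
  assumes [measurable]: "f \<in> borel_measurable M" "g \<in> measurable M Prices"
  shows "(\<lambda>x. stock (f x) (g x) t) \<in> borel_measurable M"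
proof (induction t)
  case (Suc t)
  note Suc[measurable]
  have [measurable]: "(\<lambda>x. g x t) \<in> borel_measurable M"
    using measurable_compose[OF assms(2) measurable_coordinate] by simp
  show ?case by simp
qed simp

lemma measurable_reward[measurable (raw)]:
  assumes [measurable]: "f \<in> borel_measurable M" "g \<in> measurable M Prices"
  shows "(\<lambda>x. reward t (f x) (g x)) \<in> borel_measurable M"
proof -
  have [measurable]: "(\<lambda>x. g x t) \<in> borel_measurable M"
    using measurable_compose[OF assms(2) measurable_coordinate] by simp
  show ?thesis
    unfolding reward_def stage_reward_def by measurable
qed

lemma policy_nonneg: "0 \<le> x \<Longrightarrow> 0 \<le> policy x p"
  using T_nonneg[of p] by (simp add: policy_def)

lemma policy_le: "policy x p \<le> x"
  by (simp add: policy_def)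

lemma stock_nonneg: "0 \<le> x \<Longrightarrow> 0 \<le> stock x \<omega> t"
  by (induction t) (simp_all add: policy_nonneg)

lemma stock_le: "stock x \<omega> t \<le> x"
  by (induction t) (auto intro: order_trans[OF policy_le])

lemma stock_case_nat: "stock x (case_nat p \<omega>) (Suc t) = stock (policy x p) \<omega> t"
  by (induction t) auto

lemma reward_case_nat: "reward (Suc t) x (case_nat p \<omega>) = \<beta> * reward t (policy x p) \<omega>"
  unfolding reward_def stock_case_nat by simp

lemma abs_stage_reward_le:
  assumes "0 \<le> y" "y \<le> x"
  shows "\<bar>stage_reward y p\<bar> \<le> \<bar>p\<bar> * x + C x"
proof -
  have "\<bar>p * (y - policy y p)\<bar> \<le> \<bar>p\<bar> * x"
    using assms policy_nonneg[of y p] policy_le[of y p] by (simp add: abs_mult mult_left_mono)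
  moreover have "\<bar>C (policy y p)\<bar> \<le> C x"
    using assms policy_le[of y p] C_nonneg mono_C by (simp add: monoD)
  ultimately show ?thesis
    unfolding stage_reward_def by linarith
qed

lemma abs_reward_le: "0 \<le> x \<Longrightarrow> \<bar>reward t x \<omega>\<bar> \<le> \<beta> ^ t * (\<bar>\<omega> t\<bar> * x + C x)"
  unfolding reward_def using beta_pos
  by (simp add: abs_mult mult_left_mono abs_stage_reward_le stock_nonneg stock_le)

lemma integrable_abs_coordinate: "integrable Prices (\<lambda>\<omega>. \<bar>\<omega> t\<bar>)"
  and integral_abs_coordinate: "(\<integral>\<omega>. \<bar>\<omega> t\<bar> \<partial>Prices) = mean_abs_price"
proof -
  have coordinate: "(\<lambda>\<omega>. \<omega> t) \<in> measurable Prices P"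
    by (rule measurable_component_singleton) simp
  have distr: "distr Prices P (\<lambda>\<omega>. \<omega> t) = P"
    by (rule distr_PiM_component) (auto intro: prob_space_axioms)
  have "integrable (distr Prices P (\<lambda>\<omega>. \<omega> t)) (\<lambda>p. \<bar>p\<bar>)"
    unfolding distr using integrable_price by simp
  then show "integrable Prices (\<lambda>\<omega>. \<bar>\<omega> t\<bar>)"
    using integrable_distr_eq[OF coordinate, of "\<lambda>p. \<bar>p\<bar>"] by simp
  have "(\<integral>p. \<bar>p\<bar> \<partial>distr Prices P (\<lambda>\<omega>. \<omega> t)) = (\<integral>\<omega>. \<bar>\<omega> t\<bar> \<partial>Prices)"
    by (rule integral_distr[OF coordinate]) simp
  then show "(\<integral>\<omega>. \<bar>\<omega> t\<bar> \<partial>Prices) = mean_abs_price"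
    unfolding distr mean_abs_price_def by simp
qed

lemma integrable_reward:
  assumes "0 \<le> x"
  shows "integrable Prices (reward t x)"
proof (rule Bochner_Integration.integrable_bound)
  interpret Prices: prob_space Prices
    by (rule prob_space_Prices)
  show "integrable Prices (\<lambda>\<omega>. \<beta> ^ t * (\<bar>\<omega> t\<bar> * x + C x))"
    using integrable_abs_coordinate by simp
  show "AE \<omega> in Prices. norm (reward t x \<omega>) \<le> norm (\<beta> ^ t * (\<bar>\<omega> t\<bar> * x + C x))"
  proof (rule AE_I2)
    fix \<omega> :: "nat \<Rightarrow> real"
    have "0 \<le> \<beta> ^ t * (\<bar>\<omega> t\<bar> * x + C x)"
      using beta_pos C_nonneg[of x] assms by simp
    then show "norm (reward t x \<omega>) \<le> norm (\<beta> ^ t * (\<bar>\<omega> t\<bar> * x + C x))"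
      using abs_reward_le[OF assms, of t \<omega>] by simp
  qed
qed measurable

lemma integral_abs_reward_le:
  assumes "0 \<le> x"
  shows "(\<integral>\<omega>. \<bar>reward t x \<omega>\<bar> \<partial>Prices) \<le> \<beta> ^ t * reward_bound x"
proof -
  interpret Prices: prob_space Prices
    by (rule prob_space_Prices)
  have "(\<integral>\<omega>. \<bar>reward t x \<omega>\<bar> \<partial>Prices) \<le> (\<integral>\<omega>. \<beta> ^ t * (\<bar>\<omega> t\<bar> * x + C x) \<partial>Prices)"
    using integrable_abs_coordinate integrable_reward[OF assms]
    by (intro integral_mono) (auto simp: abs_reward_le[OF assms])
  also have "\<dots> = \<beta> ^ t * reward_bound x"
    using integrable_abs_coordinate integral_abs_coordinate
    by (simp add: Prices.prob_space reward_bound_def)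
  finally show ?thesis .
qed

lemma abs_expected_reward_le: "0 \<le> x \<Longrightarrow> \<bar>expected_reward t x\<bar> \<le> \<beta> ^ t * reward_bound x"
  unfolding expected_reward_def by (rule order_trans[OF integral_abs_bound integral_abs_reward_le])

lemma integrable_stage_reward:
  assumes "0 \<le> x"
  shows "integrable P (stage_reward x)"
proof (rule Bochner_Integration.integrable_bound)
  show "integrable P (\<lambda>p. \<bar>p\<bar> * x + C x)"
    using integrable_price by simp
  show "AE p in P. norm (stage_reward x p) \<le> norm (\<bar>p\<bar> * x + C x)"
  proof (rule AE_I2)
    fix p :: real
    have "0 \<le> \<bar>p\<bar> * x + C x"
      using C_nonneg[of x] assms by simp
    then show "norm (stage_reward x p) \<le> norm (\<bar>p\<bar> * x + C x)"
      using abs_stage_reward_le[OF assms order_refl, of p] by simp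
  qed
qed (simp add: stage_reward_def[abs_def]; measurable)

lemma expected_reward_0:
  assumes "0 \<le> x"
  shows "expected_reward 0 x = (\<integral>p. stage_reward x p \<partial>P)"
proof -
  interpret Prices: prob_space Prices
    by (rule prob_space_Prices)
  show ?thesis
    using sequence_space.integral_case_nat[OF sequence_space_P integrable_reward[OF assms, of 0]]
    by (simp add: expected_reward_def reward_def Prices.prob_space)
qed

lemma
  assumes "0 \<le> x"
  shows expected_reward_Suc:
      "expected_reward (Suc t) x = \<beta> * (\<integral>p. expected_reward t (policy x p) \<partial>P)"
    and integrable_expected_reward_policy:
      "integrable P (\<lambda>p. expected_reward t (policy x p))"
proof -
  note integrable = integrable_reward[OF assms, of "Suc t"]
  show "expected_reward (Suc t) x = \<beta> * (\<integral>p. expected_reward t (policy x p) \<partial>P)"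
    using sequence_space.integral_case_nat[OF sequence_space_P integrable]
    by (simp add: expected_reward_def reward_case_nat)
  show "integrable P (\<lambda>p. expected_reward t (policy x p))"
    using sequence_space.integrable_integral_case_nat[OF sequence_space_P integrable] beta_pos
    by (simp add: expected_reward_def reward_case_nat)
qed

lemma summable_geometric_mult: "summable (\<lambda>t. \<beta> ^ t * K)"
  using beta_pos beta_less_one by (intro summable_mult2 summable_geometric) simp

lemma sums_policy_value:
  assumes "0 \<le> x"
  shows "(\<lambda>t. expected_reward t x) sums policy_value x"
proof -
  have summable: "summable (\<lambda>t. \<integral>\<omega>. norm (reward t x \<omega>) \<partial>Prices)"
    by (rule summable_comparison_test'[OF summable_geometric_mult[of "reward_bound x"], where N=0])
      (use integral_abs_reward_le[OF assms] in auto)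
  have "(\<lambda>t. expected_reward t x) sums (\<integral>\<omega>. (\<Sum>t. reward t x \<omega>) \<partial>Prices)"
    unfolding expected_reward_def
    using integrable_reward[OF assms]
      AE_summable_norm_if_summable_integral_norm[OF integrable_reward[OF assms] summable] summable
    by (rule sums_integral)
  then show ?thesis
    by (simp add: policy_value_def Vbar_def reward_def stage_reward_def)
qed

lemma horizon_value_tendsto: "0 \<le> x \<Longrightarrow> (\<lambda>n. horizon_value n x) \<longlonglongrightarrow> policy_value x"
  unfolding horizon_value_def using sums_policy_value by (simp add: sums_def)

lemma mean_abs_price_nonneg: "0 \<le> mean_abs_price"
  by (simp add: mean_abs_price_def)

lemma reward_bound_nonneg: "0 \<le> x \<Longrightarrow> 0 \<le> reward_bound x"
  using mean_abs_price_nonneg C_nonneg by (simp add: reward_bound_def)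

lemma reward_bound_mono: "0 \<le> y \<Longrightarrow> y \<le> x \<Longrightarrow> reward_bound y \<le> reward_bound x"
  using mean_abs_price_nonneg mono_C by (simp add: reward_bound_def add_mono mult_left_mono monoD)

lemma abs_horizon_value_le:
  assumes "0 \<le> x"
  shows "\<bar>horizon_value n x\<bar> \<le> reward_bound x / (1 - \<beta>)"
proof -
  have "\<bar>horizon_value n x\<bar> \<le> (\<Sum>t<n. \<beta> ^ t * reward_bound x)"
    unfolding horizon_value_def
    using abs_expected_reward_le[OF assms] by (intro order_trans[OF sum_abs sum_mono])
  also have "\<dots> \<le> (\<Sum>t. \<beta> ^ t * reward_bound x)"
    using reward_bound_nonneg[OF assms] beta_pos
    by (intro sum_le_suminf summable_geometric_mult) auto
  also have "\<dots> = reward_bound x / (1 - \<beta>)"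
    using beta_pos beta_less_one
    by (simp add: suminf_mult2[symmetric] summable_geometric suminf_geometric)
  finally show ?thesis .
qed

lemma abs_policy_value_le: "0 \<le> x \<Longrightarrow> \<bar>policy_value x\<bar> \<le> reward_bound x / (1 - \<beta>)"
  by (rule LIMSEQ_le_const2[OF tendsto_rabs[OF horizon_value_tendsto]]) (auto intro: abs_horizon_value_le)

lemma measurable_expected_reward[measurable (raw)]:
  assumes [measurable]: "g \<in> borel_measurable P"
  shows "(\<lambda>p. expected_reward t (g p)) \<in> borel_measurable P"
proof -
  interpret Prices: prob_space Prices
    by (rule prob_space_Prices)
  have "(\<lambda>(p, \<omega>). reward t (g p) \<omega>) \<in> borel_measurable (P \<Otimes>\<^sub>M Prices)"
    by measurable
  then show ?thesis
    unfolding expected_reward_def by (rule Prices.borel_measurable_lebesgue_integral)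
qed

lemma
  assumes [measurable]: "g \<in> borel_measurable P" and g: "\<And>p. 0 \<le> g p" "\<And>p. g p \<le> X"
  shows integrable_horizon_value_comp: "integrable P (\<lambda>p. horizon_value n (g p))"
    and integrable_policy_value_comp: "integrable P (\<lambda>p. policy_value (g p))"
proof -
  define B where "B = reward_bound X / (1 - \<beta>)"
  have B: "reward_bound (g p) / (1 - \<beta>) \<le> B" for p
    using reward_bound_mono[OF g] beta_less_one by (simp add: B_def divide_right_mono)
  have "0 \<le> B"
    using reward_bound_nonneg order_trans[OF g] beta_less_one by (simp add: B_def)
  have horizon[measurable]: "(\<lambda>p. horizon_value n (g p)) \<in> borel_measurable P" for n
    unfolding horizon_value_def by measurable
  have "(\<lambda>p. policy_value (g p)) \<in> borel_measurable P"
    using horizon_value_tendsto[OF g(1)] horizon by (rule borel_measurable_LIMSEQ_real)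
  then show "integrable P (\<lambda>p. policy_value (g p))"
    using abs_policy_value_le[OF g(1)] B \<open>0 \<le> B\<close>
    by (intro Bochner_Integration.integrable_bound[OF integrable_const[of B]] AE_I2)
      (auto intro: order_trans)
  show "integrable P (\<lambda>p. horizon_value n (g p))"
    using abs_horizon_value_le[OF g(1)] B \<open>0 \<le> B\<close>
    by (intro Bochner_Integration.integrable_bound[OF integrable_const[of B]] AE_I2)
      (auto intro: order_trans)
qed

lemma horizon_value_Suc:
  assumes "0 \<le> x"
  shows "horizon_value (Suc n) x = (\<integral>p. stage_reward x p + \<beta> * horizon_value n (policy x p) \<partial>P)"
proof -
  have integrable: "integrable P (\<lambda>p. horizon_value n (policy x p))"
    using assms by (intro integrable_horizon_value_comp[of _ x]) (auto simp: policy_nonneg policy_le)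
  have "horizon_value (Suc n) x = expected_reward 0 x + (\<Sum>t<n. expected_reward (Suc t) x)"
    unfolding horizon_value_def by (rule sum.lessThan_Suc_shift)
  also have "(\<Sum>t<n. expected_reward (Suc t) x) = \<beta> * (\<integral>p. horizon_value n (policy x p) \<partial>P)"
    using integrable_expected_reward_policy[OF assms]
    by (simp add: expected_reward_Suc[OF assms] horizon_value_def sum_distrib_left
        Bochner_Integration.integral_sum)
  finally show ?thesis
    using integrable_stage_reward[OF assms] integrable
    by (simp add: expected_reward_0[OF assms])
qed

lemma abs_stage_reward_add_horizon_value_le:
  assumes "0 \<le> x"
  shows "\<bar>stage_reward x p + \<beta> * horizon_value n (policy x p)\<bar>
    \<le> \<bar>stage_reward x p\<bar> + \<beta> * (reward_bound x / (1 - \<beta>))"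
proof -
  have "\<bar>horizon_value n (policy x p)\<bar> \<le> reward_bound (policy x p) / (1 - \<beta>)"
    using assms by (simp add: abs_horizon_value_le policy_nonneg)
  also have "\<dots> \<le> reward_bound x / (1 - \<beta>)"
    using assms reward_bound_mono[OF policy_nonneg policy_le] beta_less_one
    by (simp add: divide_right_mono)
  finally have "\<beta> * \<bar>horizon_value n (policy x p)\<bar> \<le> \<beta> * (reward_bound x / (1 - \<beta>))"
    using beta_pos by (intro mult_left_mono) auto
  then show ?thesis
    using beta_pos abs_triangle_ineq[of "stage_reward x p" "\<beta> * horizon_value n (policy x p)"]
    by (simp add: abs_mult)
qed

text \<open>The Bellman equation is the limit of \<open>horizon_value_Suc\<close>, by dominated convergence.\<close>
lemma policy_value_bellman:
  assumes "0 \<le> x"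
  shows "policy_value x = (\<integral>p. stage_reward x p + \<beta> * policy_value (policy x p) \<partial>P)"
proof -
  have policy: "0 \<le> policy x p" "policy x p \<le> x" for p
    using assms by (simp_all add: policy_nonneg policy_le)
  have "stage_reward x \<in> borel_measurable P"
    using integrable_stage_reward[OF assms] by simp
  moreover have "(\<lambda>p. policy_value (policy x p)) \<in> borel_measurable P"
    using integrable_policy_value_comp[of "policy x", OF _ policy] by simp
  moreover have "(\<lambda>p. horizon_value n (policy x p)) \<in> borel_measurable P" for n
    using integrable_horizon_value_comp[of "policy x", OF _ policy] by simp
  ultimately have measurable:
    "(\<lambda>p. stage_reward x p + \<beta> * policy_value (policy x p)) \<in> borel_measurable P"
    "(\<lambda>p. stage_reward x p + \<beta> * horizon_value n (policy x p)) \<in> borel_measurable P" for n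
    by auto
  have "(\<lambda>n. \<integral>p. stage_reward x p + \<beta> * horizon_value n (policy x p) \<partial>P)
      \<longlonglongrightarrow> (\<integral>p. stage_reward x p + \<beta> * policy_value (policy x p) \<partial>P)"
  proof (rule integral_dominated_convergence)
    show "integrable P (\<lambda>p. \<bar>stage_reward x p\<bar> + \<beta> * (reward_bound x / (1 - \<beta>)))"
      using integrable_stage_reward[OF assms] by simp
    show "AE p in P. (\<lambda>n. stage_reward x p + \<beta> * horizon_value n (policy x p))
        \<longlonglongrightarrow> stage_reward x p + \<beta> * policy_value (policy x p)"
      using policy by (intro AE_I2 tendsto_intros horizon_value_tendsto)
    show "AE p in P. norm (stage_reward x p + \<beta> * horizon_value n (policy x p))
        \<le> \<bar>stage_reward x p\<bar> + \<beta> * (reward_bound x / (1 - \<beta>))" for n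
      using abs_stage_reward_add_horizon_value_le[OF assms] by simp
  qed (fact measurable)+
  then have "(\<lambda>n. horizon_value (Suc n) x)
      \<longlonglongrightarrow> (\<integral>p. stage_reward x p + \<beta> * policy_value (policy x p) \<partial>P)"
    by (simp add: horizon_value_Suc[OF assms])
  then show ?thesis
    using LIMSEQ_unique LIMSEQ_Suc[OF horizon_value_tendsto[OF assms]] by blast
qed

lemma stage_increment_le:
  assumes slope: "\<And>u v. 0 \<le> u \<Longrightarrow> u \<le> v \<Longrightarrow> v \<le> b \<Longrightarrow> \<beta> * (g v - g u) \<le> C v - C u"
    and "0 \<le> p" "0 \<le> a" "a \<le> b"
  shows "(stage_reward b p + \<beta> * g (policy b p)) - (stage_reward a p + \<beta> * g (policy a p))
    \<le> (b - a) * (p * indicator {q. T q < b} p)"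
proof (cases "b \<le> T p")
  case True
  then have "policy b p = b" "policy a p = a"
    using \<open>a \<le> b\<close> by (auto simp: policy_def)
  with True slope[of a b] assms(2-) show ?thesis
    by (simp add: stage_reward_def algebra_simps)
next
  case False
  show ?thesis
  proof (cases "T p \<le> a")
    case True
    then have "policy b p = T p" "policy a p = T p"
      using False by (auto simp: policy_def)
    with False show ?thesis
      by (simp add: stage_reward_def algebra_simps)
  next
    case between: False
    then have "policy b p = T p" "policy a p = a"
      using False by (auto simp: policy_def)
    moreover have "\<beta> * (g (T p) - g a) \<le> C (T p) - C a"
      using slope between False assms(3) by simp
    moreover have "p * (b - T p) \<le> p * (b - a)"
      using between \<open>0 \<le> p\<close> by (intro mult_left_mono) auto
    ultimately show ?thesis
      using False by (simp add: stage_reward_def algebra_simps)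
  qed
qed

lemma integrable_price_indicator: "A \<in> sets borel \<Longrightarrow> integrable P (\<lambda>p. p * indicator A p)"
  using integrable_real_mult_indicator[of A P "\<lambda>p. p"] integrable_price sets_P by simp

lemma horizon_value_increment_le:
  assumes nonneg: "AE p in P. 0 \<le> p"
    and slope: "\<And>u v. 0 \<le> u \<Longrightarrow> u \<le> v \<Longrightarrow> v \<le> b \<Longrightarrow>
      \<beta> * (horizon_value n v - horizon_value n u) \<le> C v - C u"
    and "0 \<le> a" "a \<le> b"
  shows "horizon_value (Suc n) b - horizon_value (Suc n) a
    \<le> (b - a) * (\<integral>p. p * indicator {q. T q < b} p \<partial>P)"
proof -
  define g where "g y p = stage_reward y p + \<beta> * horizon_value n (policy y p)" for y p
  have integrable: "integrable P (g y)" if "0 \<le> y" for y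
    using integrable_stage_reward[OF that] integrable_horizon_value_comp[of "policy y" y n] that
    by (auto simp: g_def[abs_def] policy_nonneg policy_le)
  have "horizon_value (Suc n) b - horizon_value (Suc n) a = (\<integral>p. g b p - g a p \<partial>P)"
    using assms(3,4) integrable[of a] integrable[of b]
    by (simp add: horizon_value_Suc g_def[symmetric])
  also have "\<dots> \<le> (\<integral>p. (b - a) * (p * indicator {q. T q < b} p) \<partial>P)"
  proof (rule integral_mono_AE)
    show "AE p in P. g b p - g a p \<le> (b - a) * (p * indicator {q. T q < b} p)"
      using nonneg by eventually_elim (use stage_increment_le[OF slope] assms(3,4) in \<open>simp add: g_def\<close>)
    have "{q. T q < b} \<in> sets borel"
      by measurable
    then show "integrable P (\<lambda>p. (b - a) * (p * indicator {q. T q < b} p))"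
      using integrable_price_indicator by simp
    show "integrable P (\<lambda>p. g b p - g a p)"
      using integrable assms(3,4) by auto
  qed
  finally show ?thesis
    by simp
qed

lemma discounted_horizon_value_slope_le:
  assumes nonneg: "AE p in P. 0 \<le> p"
    and sell_bound: "\<And>b. 0 < b \<Longrightarrow> b \<le> x1 \<Longrightarrow> \<beta> * (\<integral>p. p * indicator {q. T q < b} p \<partial>P) \<le> c b"
    and tangent: "\<And>a b. 0 \<le> a \<Longrightarrow> a \<le> b \<Longrightarrow> c a * (b - a) \<le> C b - C a"
    and cont: "continuous_on {0..x1} c"
  shows "0 \<le> a \<Longrightarrow> a \<le> b \<Longrightarrow> b \<le> x1 \<Longrightarrow> \<beta> * (horizon_value n b - horizon_value n a) \<le> C b - C a"
proof (induction n arbitrary: a b)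
  case 0
  then show ?case
    using mono_C by (simp add: horizon_value_def monoD)
next
  case (Suc n)
  define G where "G y = \<beta> * horizon_value (Suc n) y - C y" for y
  have increment: "G v - G u \<le> (c v - c u) * (v - u)" if "a \<le> u" "u \<le> v" "v \<le> b" for u v
  proof (cases "u = v")
    case False
    then have "0 < v" "0 \<le> u"
      using that Suc.prems by auto
    have slope: "\<beta> * (horizon_value n v' - horizon_value n u') \<le> C v' - C u'"
      if "0 \<le> u'" "u' \<le> v'" "v' \<le> v" for u' v'
      by (rule Suc.IH) (use that \<open>v \<le> b\<close> Suc.prems in linarith)+
    have "horizon_value (Suc n) v - horizon_value (Suc n) u
        \<le> (v - u) * (\<integral>p. p * indicator {q. T q < v} p \<partial>P)"
      by (rule horizon_value_increment_le[OF nonneg slope \<open>0 \<le> u\<close> \<open>u \<le> v\<close>])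
    then have "\<beta> * (horizon_value (Suc n) v - horizon_value (Suc n) u)
        \<le> (v - u) * (\<beta> * (\<integral>p. p * indicator {q. T q < v} p \<partial>P))"
      using beta_pos mult_left_mono[of _ _ \<beta>] by (simp add: ac_simps)
    also have "\<dots> \<le> (v - u) * c v"
      using sell_bound[OF \<open>0 < v\<close>] \<open>u \<le> v\<close> \<open>v \<le> b\<close> \<open>b \<le> x1\<close> by (intro mult_left_mono) auto
    finally show ?thesis
      using tangent[OF \<open>0 \<le> u\<close> \<open>u \<le> v\<close>] by (simp add: G_def algebra_simps)
  qed simp
  have "G b \<le> G a"
    by (rule le_of_increments_le_oscillation[OF continuous_on_subset[OF cont] _ increment])
      (use Suc.prems in auto)
  then show ?case
    by (simp add: G_def algebra_simps)
qed

lemma discounted_policy_value_slope_le: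
  assumes "AE p in P. 0 \<le> p"
    and "\<And>b. 0 < b \<Longrightarrow> b \<le> x1 \<Longrightarrow> \<beta> * (\<integral>p. p * indicator {q. T q < b} p \<partial>P) \<le> c b"
    and "\<And>a b. 0 \<le> a \<Longrightarrow> a \<le> b \<Longrightarrow> c a * (b - a) \<le> C b - C a"
    and "continuous_on {0..x1} c"
    and "0 \<le> a" "a \<le> b" "b \<le> x1"
  shows "\<beta> * (policy_value b - policy_value a) \<le> C b - C a"
proof (rule LIMSEQ_le_const2)
  show "(\<lambda>n. \<beta> * (horizon_value n b - horizon_value n a)) \<longlonglongrightarrow> \<beta> * (policy_value b - policy_value a)"
    using assms(5-) by (intro tendsto_intros horizon_value_tendsto) auto
  show "\<exists>N. \<forall>n\<ge>N. \<beta> * (horizon_value n b - horizon_value n a) \<le> C b - C a"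
    using discounted_horizon_value_slope_le[OF assms(1-4) assms(5-)] by blast
qed

lemma Vbar_eq_policy_value:
  assumes y: "\<And>x p. 0 \<le> x \<Longrightarrow> y x p = policy x p"
    and C': "\<And>x. 0 \<le> x \<Longrightarrow> C' x = C x"
    and "0 \<le> x"
  shows "Vbar P \<beta> C' y x = policy_value x"
proof -
  have "inv_path y x \<omega> t = stock x \<omega> t" for \<omega> t
    by (induction t) (simp_all add: y stock_nonneg[OF \<open>0 \<le> x\<close>])
  then show ?thesis
    unfolding policy_value_def Vbar_def using C' stock_nonneg[OF \<open>0 \<le> x\<close>]
    by (simp add: y policy_nonneg)
qed

end

section \<open>Comparison of two target policies\<close>

locale target_policy_pair = S: target_policy P \<beta> C TS + M: target_policy P \<beta> C TM
  for P :: "real measure" and \<beta> :: real and C TS TM :: "real \<Rightarrow> real" +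
  assumes target_le: "\<And>p. TM p \<le> TS p"
begin

lemma lower_policy_le: "M.policy x p \<le> S.policy x p"
  using target_le[of p] by (auto simp: M.policy_def S.policy_def)

text \<open>Pointwise in \<open>p \<ge> 0\<close>: the lower target sells more now, which earns more revenue, and by
  the slope bound the continuation value lost is at most the cost saved.\<close>
lemma one_step_improvement:
  assumes nonneg: "AE p in P. 0 \<le> p"
    and slope: "\<And>a b. 0 \<le> a \<Longrightarrow> a \<le> b \<Longrightarrow> b \<le> x \<Longrightarrow>
      \<beta> * (S.policy_value b - S.policy_value a) \<le> C b - C a"
    and "0 \<le> x"
  shows "S.policy_value x \<le> (\<integral>p. M.stage_reward x p + \<beta> * S.policy_value (M.policy x p) \<partial>P)"
proof -
  have bounds: "0 \<le> M.policy x p" "M.policy x p \<le> x" "0 \<le> S.policy x p" "S.policy x p \<le> x" for p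
    using \<open>0 \<le> x\<close> by (simp_all add: M.policy_nonneg M.policy_le S.policy_nonneg S.policy_le)
  have "S.policy_value x = (\<integral>p. S.stage_reward x p + \<beta> * S.policy_value (S.policy x p) \<partial>P)"
    by (rule S.policy_value_bellman[OF \<open>0 \<le> x\<close>])
  also have "\<dots> \<le> (\<integral>p. M.stage_reward x p + \<beta> * S.policy_value (M.policy x p) \<partial>P)"
  proof (rule integral_mono_AE)
    show "integrable P (\<lambda>p. S.stage_reward x p + \<beta> * S.policy_value (S.policy x p))"
      using S.integrable_stage_reward[OF \<open>0 \<le> x\<close>]
        S.integrable_policy_value_comp[of "S.policy x", OF _ bounds(3,4)] by simp
    show "integrable P (\<lambda>p. M.stage_reward x p + \<beta> * S.policy_value (M.policy x p))"
      using M.integrable_stage_reward[OF \<open>0 \<le> x\<close>]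
        S.integrable_policy_value_comp[of "M.policy x", OF _ bounds(1,2)] by simp
    show "AE p in P. S.stage_reward x p + \<beta> * S.policy_value (S.policy x p)
        \<le> M.stage_reward x p + \<beta> * S.policy_value (M.policy x p)"
      using nonneg
    proof eventually_elim
      case (elim p)
      have "\<beta> * (S.policy_value (S.policy x p) - S.policy_value (M.policy x p))
          \<le> C (S.policy x p) - C (M.policy x p)"
        using slope bounds lower_policy_le by simp
      moreover have "p * (x - S.policy x p) \<le> p * (x - M.policy x p)"
        using elim lower_policy_le by (intro mult_left_mono) auto
      ultimately show ?case
        by (simp add: S.stage_reward_def M.stage_reward_def algebra_simps)
    qed
  qed
  finally show ?thesis .
qed

lemma discounted_mean_value_gap_le:
  assumes nonneg: "AE p in P. 0 \<le> p"
    and slope: "\<And>a b. 0 \<le> a \<Longrightarrow> a \<le> b \<Longrightarrow> b \<le> x \<Longrightarrow>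
      \<beta> * (S.policy_value b - S.policy_value a) \<le> C b - C a"
    and "0 \<le> x"
  shows "\<beta> * (\<integral>p. M.policy_value (M.policy x p) - S.policy_value (M.policy x p) \<partial>P)
    \<le> M.policy_value x - S.policy_value x"
proof -
  have bounds: "0 \<le> M.policy x p" "M.policy x p \<le> x" for p
    using \<open>0 \<le> x\<close> by (simp_all add: M.policy_nonneg M.policy_le)
  have "integrable P (\<lambda>p. M.stage_reward x p + \<beta> * M.policy_value (M.policy x p))"
    "integrable P (\<lambda>p. M.stage_reward x p + \<beta> * S.policy_value (M.policy x p))"
    using M.integrable_stage_reward[OF \<open>0 \<le> x\<close>]
      M.integrable_policy_value_comp[of "M.policy x", OF _ bounds]
      S.integrable_policy_value_comp[of "M.policy x", OF _ bounds] by simp_all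
  then have "\<beta> * (\<integral>p. M.policy_value (M.policy x p) - S.policy_value (M.policy x p) \<partial>P)
      = (\<integral>p. M.stage_reward x p + \<beta> * M.policy_value (M.policy x p) \<partial>P)
        - (\<integral>p. M.stage_reward x p + \<beta> * S.policy_value (M.policy x p) \<partial>P)"
    by (simp add: Bochner_Integration.integral_diff[symmetric] flip: right_diff_distrib)
  also have "\<dots> \<le> M.policy_value x - S.policy_value x"
    using M.policy_value_bellman[OF \<open>0 \<le> x\<close>] one_step_improvement[OF nonneg slope \<open>0 \<le> x\<close>]
    by simp
  finally show ?thesis .
qed

lemma bdd_below_policy_value_gap: "bdd_below ((\<lambda>y. M.policy_value y - S.policy_value y) ` {0..x1})"
proof (rule bdd_belowI2)
  fix y :: real assume "y \<in> {0..x1}"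
  then have "S.reward_bound y / (1 - \<beta>) \<le> S.reward_bound x1 / (1 - \<beta>)"
    using S.reward_bound_mono[of y x1] S.beta_less_one by (simp add: divide_right_mono)
  then have "\<bar>S.policy_value y\<bar> \<le> S.reward_bound x1 / (1 - \<beta>)"
    "\<bar>M.policy_value y\<bar> \<le> S.reward_bound x1 / (1 - \<beta>)"
    using \<open>y \<in> {0..x1}\<close> S.abs_policy_value_le[of y] M.abs_policy_value_le[of y] by auto
  then show "- 2 * (S.reward_bound x1 / (1 - \<beta>)) \<le> M.policy_value y - S.policy_value y"
    by linarith
qed

lemma policy_value_le:
  assumes nonneg: "AE p in P. 0 \<le> p"
    and slope: "\<And>a b. 0 \<le> a \<Longrightarrow> a \<le> b \<Longrightarrow> b \<le> x1 \<Longrightarrow>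
      \<beta> * (S.policy_value b - S.policy_value a) \<le> C b - C a"
    and "x \<in> {0..x1}"
  shows "S.policy_value x \<le> M.policy_value x"
proof -
  define D where "D y = M.policy_value y - S.policy_value y" for y
  have bound: "\<beta> * m \<le> D y" if y: "y \<in> {0..x1}" and m: "\<And>y'. y' \<in> {0..x1} \<Longrightarrow> m \<le> D y'"
    for y m
  proof -
    have bounds: "0 \<le> M.policy y p" "M.policy y p \<le> y" for p
      using y by (simp_all add: M.policy_nonneg M.policy_le)
    then have range: "M.policy y p \<in> {0..x1}" for p
      using y by (auto intro: order_trans)
    have "m = (\<integral>p. m \<partial>P)"
      by (simp add: S.prob_space)
    also have "\<dots> \<le> (\<integral>p. D (M.policy y p) \<partial>P)"
      using M.integrable_policy_value_comp[of "M.policy y", OF _ bounds]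
        S.integrable_policy_value_comp[of "M.policy y", OF _ bounds] m[OF range]
      by (intro integral_mono) (auto simp: D_def)
    finally have "\<beta> * m \<le> \<beta> * (\<integral>p. D (M.policy y p) \<partial>P)"
      using S.beta_pos by simp
    also have "\<dots> \<le> D y"
      unfolding D_def using y by (intro discounted_mean_value_gap_le[OF nonneg]) (auto intro: slope)
    finally show ?thesis .
  qed
  have "0 \<le> D x"
    by (rule nonneg_if_discounted_infimum_bound[OF S.beta_less_one _ _ bound \<open>x \<in> {0..x1}\<close>])
      (use \<open>x \<in> {0..x1}\<close> bdd_below_policy_value_gap in \<open>auto simp: D_def[abs_def]\<close>)
  then show ?thesis
    by (simp add: D_def)
qed

end

context marginal_cost
begin

lemma target_policy_clip_target:
  assumes "prob_space P" "sets P = sets borel" "0 < \<beta>" "\<beta> < 1" "\<And>x. 0 \<le> C x" "mono C"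
    and "integrable P (\<lambda>p. p)" and "z \<in> borel_measurable borel"
  shows "target_policy P \<beta> C (clip_target c z)"
proof (intro target_policy.intro target_policy_axioms.intro measurable_clip_target)
qed (fact assms clip_target_nonneg)+

lemma Vbar_clip_policy:
  assumes "target_policy P \<beta> C' (clip_target c z)"
    and "\<And>x. 0 \<le> x \<Longrightarrow> C' x = C x" and "0 \<le> x"
  shows "Vbar P \<beta> C (clip_policy c z) x = target_policy.policy_value P \<beta> C' (clip_target c z) x"
  by (rule target_policy.Vbar_eq_policy_value[OF assms(1)])
    (simp_all add: clip_policy_eq_min target_policy.policy_def[OF assms(1)] assms(2,3))

lemma integral_price_below_clip_target_le:
  assumes antimono: "\<And>p q. p < q \<Longrightarrow> z q < z p" and "z \<in> borel_measurable borel"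
    and "sets P = sets borel" "integrable P (\<lambda>p. p)" "AE p in P. 0 \<le> p" and "0 < b"
  shows "(\<integral>p. p * indicator {q. clip_target c z q < b} p \<partial>P)
    \<le> (\<integral>p. p * indicator {q. pstar (clip_policy c z) b < ereal q} p \<partial>P)"
proof (rule integral_mult_indicator_mono)
  show "{q. clip_target c z q < b} \<subseteq> {q. pstar (clip_policy c z) b < ereal q}"
    using pstar_clip_policy_less[of z, OF antimono \<open>0 < b\<close>] by blast
  show "{q. clip_target c z q < b} \<in> sets P" "{q. pstar (clip_policy c z) b < ereal q} \<in> sets P"
    using assms(2) unfolding assms(3) by measurable
qed (fact assms)+

lemma discounted_clip_target_value_slope_le:
  assumes "target_policy P \<beta> C (clip_target c z)"
    and "\<And>p q. p < q \<Longrightarrow> z q < z p" and "z \<in> borel_measurable borel"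
    and nonneg: "AE p in P. 0 \<le> p"
    and sell: "\<And>x. x \<in> {0..x1} \<Longrightarrow>
      \<beta> * (\<integral>p. p * indicator {q. pstar (clip_policy c z) x < ereal q} p \<partial>P) \<le> c x"
    and tangent: "\<And>a b. 0 \<le> a \<Longrightarrow> a \<le> b \<Longrightarrow> c a * (b - a) \<le> C b - C a"
    and "0 \<le> a" "a \<le> b" "b \<le> x1"
  shows "\<beta> * (target_policy.policy_value P \<beta> C (clip_target c z) b
      - target_policy.policy_value P \<beta> C (clip_target c z) a) \<le> C b - C a"
proof -
  interpret target_policy P \<beta> C "clip_target c z"
    by fact
  show ?thesis
  proof (rule discounted_policy_value_slope_le[OF nonneg _ tangent _ assms(7-)])
    show "continuous_on {0..x1} c"
      using continuous by (rule continuous_on_subset) auto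
    fix x assume "0 < x" "x \<le> x1"
    have "\<beta> * (\<integral>p. p * indicator {q. clip_target c z q < x} p \<partial>P)
        \<le> \<beta> * (\<integral>p. p * indicator {q. pstar (clip_policy c z) x < ereal q} p \<partial>P)"
      using beta_pos \<open>0 < x\<close>
      by (intro mult_left_mono integral_price_below_clip_target_le assms(2,3) sets_P integrable_price
          nonneg) auto
    also have "\<dots> \<le> c x"
      using sell \<open>0 < x\<close> \<open>x \<le> x1\<close> by simp
    finally show "\<beta> * (\<integral>p. p * indicator {q. clip_target c z q < x} p \<partial>P) \<le> c x" .
  qed
qed

end

theorem proposition3:
  fixes \<beta> x1 :: real and C c :: "real \<Rightarrow> real" and P :: "real measure"
    and N :: nat and ps :: "nat \<Rightarrow> real"
  assumes beta: "0 < \<beta>" "\<beta> < 1"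
    and x1: "0 \<le> x1"
    and C_nonneg: "\<forall>x\<ge>0. C x \<ge> 0"
    and C_incr: "mono_on {0..} C"
    and C_sconv: "strict_convex_on {0..} C"
    and C_deriv: "\<forall>x\<ge>0. (C has_real_derivative c x) (at x within {0..})"
    and c_cont: "continuous_on {0..} c"
    and c_lim: "filterlim c at_top at_top"
    and P_prob: "prob_space P"
    and P_sets: "sets P = sets borel"
    and P_nonneg: "AE p in P. 0 \<le> p"
    and P_mean: "integrable P (\<lambda>p. p)"
    and P_noatom: "\<forall>p. measure P {p} = 0"
    and N_pos: "0 < N"
    and ps_nonneg: "\<forall>i<N. 0 \<le> ps i"
    and cond: "\<forall>x\<in>{0..x1}. c x \<ge> \<beta> * (\<integral>p. p * indicator {q. ereal q > pstar (y_S c \<beta> N ps) x} p \<partial>P)"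
  shows "\<forall>x\<in>{0..x1}. Vbar P \<beta> C (y_M c \<beta> N ps) x \<ge> Vbar P \<beta> C (y_S c \<beta> N ps) x"
proof -
  interpret marginal_cost c
    by (rule marginal_cost.intro[OF strict_mono_on_derivative_if_strict_convex[OF C_sconv
          C_deriv[rule_format] c_cont] c_cont c_lim])
  \<comment> \<open>\<open>C\<close> is only specified on \<open>[0, \<infinity>)\<close>; this monotone extension is Borel measurable.\<close>
  define C' where "C' x = C (max 0 x)" for x
  have "mono C'"
    unfolding C'_def by (intro monoI mono_onD[OF C_incr]) auto
  have target_policy: "target_policy P \<beta> C' (clip_target c z)" if "z \<in> borel_measurable borel" for z
    using C_nonneg by (intro target_policy_clip_target P_prob P_sets beta \<open>mono C'\<close> P_mean that)
      (simp add: C'_def)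
  have lower: "clip_target c (mpc_score \<beta> N ps) p \<le> clip_target c (sdp_score \<beta> N ps) p" for p
    using N_pos beta by (intro clip_target_mono mpc_score_le_sdp_score) auto
  interpret target_policy_pair P \<beta> C' "clip_target c (sdp_score \<beta> N ps)" "clip_target c (mpc_score \<beta> N ps)"
    by (intro target_policy_pair.intro target_policy_pair_axioms.intro target_policy
        measurable_sdp_score measurable_mpc_score lower)
  have sdp_antimono: "sdp_score \<beta> N ps q < sdp_score \<beta> N ps p" if "p < q" for p q
    using beta that by (intro sdp_score_strict_antimono) auto
  have tangent: "c a * (b - a) \<le> C' b - C' a" if "0 \<le> a" "a \<le> b" for a b
    using above_tangent_nonneg[OF convex_on_if_strict_convex_on[OF C_sconv] C_deriv[rule_format]
        c_cont, of a b] that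
    by (simp add: C'_def convex_real_interval)
  have slope: "\<beta> * (S.policy_value b - S.policy_value a) \<le> C' b - C' a"
    if "0 \<le> a" "a \<le> b" "b \<le> x1" for a b
    by (rule discounted_clip_target_value_slope_le[OF target_policy[OF measurable_sdp_score]
          sdp_antimono measurable_sdp_score P_nonneg _ tangent that])
      (use cond in \<open>auto simp: y_S_eq_clip_policy\<close>)
  have "Vbar P \<beta> C (y_S c \<beta> N ps) x = S.policy_value x"
    "Vbar P \<beta> C (y_M c \<beta> N ps) x = M.policy_value x" if "0 \<le> x" for x
    unfolding y_S_eq_clip_policy y_M_eq_clip_policy using that
    by (intro Vbar_clip_policy target_policy measurable_sdp_score measurable_mpc_score; simp add: C'_def)+
  then show ?thesis
    using policy_value_le[OF P_nonneg slope] by auto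
qed

end
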